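(* Let $X$ be a set and $d$ an ultra-semimetric on $X$. Let $E$ be the group of all finite subsets of $X$ with an even number of elements, with symmetric difference as the group operation (identify $x\in X$ with $\{x\}$, so that $x-y=x+y=\{x,y\}\triangle\emptyset$ for $x\neq y$). For $u\in E$ let $\mathrm{Conf}(u)$ be the set of finite families $\omega=\{(x_1,x_2),\dots,(x_{2n-1},x_{2n})\}$ of pairs of elements of $X$ with $\{x_1\}\triangle\{x_2\}\triangle\cdots\triangle\{x_{2n}\}=u$, and set $\varphi(\omega)=\max_{1\le i\le n}d(x_{2i-1},x_{2i})$ and $\|u\|=\inf_{\omega\in\mathrm{Conf}(u)}\varphi(\omega)$. Then: (i) for $u\neq 0$ the infimum is attained, and equals the minimum of $\varphi(\omega)$ over configurations $\omega$ in which all $2n$ entries are pairwise distinct; (ii) $\|\cdot\|$ is an ultra-seminorm on $E$, i.e. $\|0\|=0$, $\|u\|=\|-u\|\ge0$ and $\|u+v\|\le\max\{\|u\|,\|v\|\}$; (iii) $\|x-y\|=d(x,y)$ for all $x,y\in X$.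
   Context: An ultra-semimetric on $X$ is a function $d:X\times X\to[0,\infty)$ with $d(x,x)=0$, $d(x,y)=d(y,x)$ and $d(x,z)\le\max\{d(x,y),d(y,z)\}$. *)

theory Defs
  imports Complex_Main
begin

definition ultra_semimetric :: "'a set \<Rightarrow> ('a \<Rightarrow> 'a \<Rightarrow> real) \<Rightarrow> bool" where
  "ultra_semimetric X d \<longleftrightarrow>
     (\<forall>x\<in>X. \<forall>y\<in>X. d x y \<ge> 0) \<and>
     (\<forall>x\<in>X. d x x = 0) \<and>
     (\<forall>x\<in>X. \<forall>y\<in>X. d x y = d y x) \<and>
     (\<forall>x\<in>X. \<forall>y\<in>X. \<forall>z\<in>X. d x z \<le> max (d x y) (d y z))"

definition symd :: "'a set \<Rightarrow> 'a set \<Rightarrow> 'a set" where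
  "symd A B = (A - B) \<union> (B - A)"

definition evenE :: "'a set \<Rightarrow> 'a set set" where
  "evenE X = {u. u \<subseteq> X \<and> finite u \<and> even (card u)}"

text \<open>A configuration is a finite family of pairs, represented as a list
  [(x1,x2),...,(x_{2n-1},x_{2n})]; its entries and its sum in E.\<close>
definition conf_entries :: "('a \<times> 'a) list \<Rightarrow> 'a list" where
  "conf_entries \<omega> = concat (map (\<lambda>(a,b). [a,b]) \<omega>)"

definition conf_sum :: "('a \<times> 'a) list \<Rightarrow> 'a set" where
  "conf_sum \<omega> = foldr (\<lambda>x S. symd {x} S) (conf_entries \<omega>) {}"

definition Conf :: "'a set \<Rightarrow> 'a set \<Rightarrow> ('a \<times> 'a) list set" where
  "Conf X u = {\<omega>. set (conf_entries \<omega>) \<subseteq> X \<and> conf_sum \<omega> = u}"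

text \<open>phi(omega) = max of d over the pairs (0 for the empty family).\<close>
definition phi :: "('a \<Rightarrow> 'a \<Rightarrow> real) \<Rightarrow> ('a \<times> 'a) list \<Rightarrow> real" where
  "phi d \<omega> = foldr max (map (\<lambda>(a,b). d a b) \<omega>) 0"

definition unorm :: "'a set \<Rightarrow> ('a \<Rightarrow> 'a \<Rightarrow> real) \<Rightarrow> 'a set \<Rightarrow> real" where
  "unorm X d u = Inf (phi d ` Conf X u)"

end

theory Submission
  imports Defs "HOL-Library.Multiset"
begin

(* The sum of a configuration is the set of points occurring an odd
   number of times among its entries, so it depends only on the multiset of
   entries.  Two reductions never increase phi and never change the sum:
   deleting a loop (x,x), and merging two pairs (a,x),(x,b) into (a,b), the latter
   by the ultrametric inequality.  Hence every configuration can be shortened to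
   one with pairwise distinct entries; such a configuration of u uses exactly the
   points of u, so its phi lies in the finite set {0} \<union> d`(u \<times> u), and the
   infimum defining the norm is a minimum over distinct configurations.
   Configurations exist by pairing up the points of u.  The ultrametric inequality
   for the norm then comes from concatenating optimal configurations, and
   the norm of {x,y} is d x y because the only distinct configurations of {x,y}
   consist of the single pair x,y in some order. *)

lemma conf_entries_Nil [simp]: "conf_entries [] = []"
  by (simp add: conf_entries_def)

lemma conf_entries_Cons [simp]: "conf_entries (p # \<omega>) = fst p # snd p # conf_entries \<omega>"
  by (cases p) (simp add: conf_entries_def)

lemma conf_entries_append [simp]: "conf_entries (\<omega> @ \<omega>') = conf_entries \<omega> @ conf_entries \<omega>'"
  by (simp add: conf_entries_def)

lemma set_conf_entries: "set (conf_entries \<omega>) = fst ` set \<omega> \<union> snd ` set \<omega>"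
  by (induction \<omega>) auto

lemma conf_sum_odd_count: "conf_sum \<omega> = {y. odd (count (mset (conf_entries \<omega>)) y)}"
proof -
  have "foldr (\<lambda>x S. symd {x} S) xs {} = {y. odd (count (mset xs) y)}" for xs :: "'a list"
    by (induction xs) (auto simp: symd_def)
  then show ?thesis by (simp add: conf_sum_def)
qed

lemma conf_sum_distinct: "distinct (conf_entries \<omega>) \<Longrightarrow> conf_sum \<omega> = set (conf_entries \<omega>)"
  unfolding conf_sum_odd_count by (auto simp flip: mset_set_set simp: count_mset_set')

lemma conf_sum_append: "conf_sum (\<omega> @ \<omega>') = symd (conf_sum \<omega>) (conf_sum \<omega>')"
  unfolding conf_sum_odd_count symd_def by auto

lemma phi_Nil [simp]: "phi d [] = 0"
  by (simp add: phi_def)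

lemma phi_Cons [simp]: "phi d (p # \<omega>) = max (d (fst p) (snd p)) (phi d \<omega>)"
  by (cases p) (simp add: phi_def)

lemma phi_nonneg: "0 \<le> phi d \<omega>"
  by (induction \<omega>) auto

lemma phi_le_iff: "phi d \<omega> \<le> r \<longleftrightarrow> 0 \<le> r \<and> (\<forall>p\<in>set \<omega>. d (fst p) (snd p) \<le> r)"
  by (induction \<omega>) auto

lemma phi_ge_pair: "p \<in> set \<omega> \<Longrightarrow> d (fst p) (snd p) \<le> phi d \<omega>"
  by (induction \<omega>) auto

lemma phi_append: "phi d (\<omega> @ \<omega>') = max (phi d \<omega>) (phi d \<omega>')"
  using phi_nonneg[of d \<omega>'] by (induction \<omega>) auto

lemma phi_in_values: "phi d \<omega> \<in> insert 0 ((\<lambda>p. d (fst p) (snd p)) ` set \<omega>)"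
  by (induction \<omega>) (auto simp: max_def)

lemma phi_mono_subset:
  assumes "set \<omega>' \<subseteq> insert p (set \<omega>)" and "d (fst p) (snd p) \<le> phi d \<omega>"
  shows "phi d \<omega>' \<le> phi d \<omega>"
  using assms phi_ge_pair[of _ \<omega> d] phi_nonneg[of d \<omega>] unfolding phi_le_iff by blast

lemma mset_entries_remove1:
  "p \<in> set \<omega> \<Longrightarrow> mset (conf_entries \<omega>) = {#fst p, snd p#} + mset (conf_entries (remove1 p \<omega>))"
  by (induction \<omega>) auto

section \<open>Shortening a configuration with a repeated entry\<close>

definition partner :: "'a \<Rightarrow> 'a \<times> 'a \<Rightarrow> 'a" where
  "partner x p = (if fst p = x then snd p else fst p)"

lemma mset_pair_partner:
  "x = fst p \<or> x = snd p \<Longrightarrow> {#fst p, snd p#} = {#x, partner x p#}"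
  by (auto simp: partner_def)

lemma dist_partner:
  assumes "ultra_semimetric X d" "fst p \<in> X" "snd p \<in> X" "x = fst p \<or> x = snd p"
  shows "d x (partner x p) = d (fst p) (snd p)"
  using assms unfolding ultra_semimetric_def partner_def by auto

lemma drop_loop:
  assumes "(x, x) \<in> set \<omega>"
  shows "length (remove1 (x, x) \<omega>) < length \<omega>"
    and "set (remove1 (x, x) \<omega>) \<subseteq> set \<omega>"
    and "conf_sum (remove1 (x, x) \<omega>) = conf_sum \<omega>"
    and "phi d (remove1 (x, x) \<omega>) \<le> phi d \<omega>"
proof -
  show "length (remove1 (x, x) \<omega>) < length \<omega>"
    using assms length_pos_if_in_set[OF assms] by (simp add: length_remove1)
  show sub: "set (remove1 (x, x) \<omega>) \<subseteq> set \<omega>"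
    by (rule set_remove1_subset)
  show "conf_sum (remove1 (x, x) \<omega>) = conf_sum \<omega>"
    unfolding conf_sum_odd_count mset_entries_remove1[OF assms] by auto
  show "phi d (remove1 (x, x) \<omega>) \<le> phi d \<omega>"
    using sub phi_ge_pair[OF assms, of d] by (intro phi_mono_subset) auto
qed

text \<open>Two pairs through a common point x are merged into one pair joining their partners;
  the sum is unchanged and, by the ultrametric inequality, phi does not increase.\<close>
lemma merge_pairs:
  assumes us: "ultra_semimetric X d" and X: "set (conf_entries \<omega>) \<subseteq> X"
    and p: "p \<in> set \<omega>" "x = fst p \<or> x = snd p"
    and q: "q \<in> set (remove1 p \<omega>)" "x = fst q \<or> x = snd q"
  defines "\<omega>' \<equiv> (partner x p, partner x q) # remove1 q (remove1 p \<omega>)"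
  shows "length \<omega>' < length \<omega>" and "set (conf_entries \<omega>') \<subseteq> X"
    and "conf_sum \<omega>' = conf_sum \<omega>" and "phi d \<omega>' \<le> phi d \<omega>"
proof -
  let ?a = "partner x p" and ?b = "partner x q"
  have q\<omega>: "q \<in> set \<omega>" using q(1) set_remove1_subset by fast
  have rest: "set (remove1 q (remove1 p \<omega>)) \<subseteq> set \<omega>"
    using set_remove1_subset by (metis order_trans)
  have pX: "fst p \<in> X" "snd p \<in> X" and qX: "fst q \<in> X" "snd q \<in> X"
    using X p(1) q\<omega> unfolding set_conf_entries by auto
  have xX: "x \<in> X" and aX: "?a \<in> X" and bX: "?b \<in> X"
    using pX qX p(2) unfolding partner_def by auto
  show "length \<omega>' < length \<omega>"
    using p(1) q(1) length_pos_if_in_set[OF q(1)] unfolding \<omega>'_def by (simp add: length_remove1)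
  show "set (conf_entries \<omega>') \<subseteq> X"
    using X rest aX bX unfolding \<omega>'_def set_conf_entries by auto
  have "mset (conf_entries \<omega>) = {#x, ?a#} + {#x, ?b#} + mset (conf_entries (remove1 q (remove1 p \<omega>)))"
    using mset_entries_remove1[OF p(1)] mset_entries_remove1[OF q(1)]
      mset_pair_partner[OF p(2)] mset_pair_partner[OF q(2)] by simp
  then show "conf_sum \<omega>' = conf_sum \<omega>"
    unfolding conf_sum_odd_count \<omega>'_def by auto
  have "d ?a ?b \<le> max (d ?a x) (d x ?b)"
    using us aX xX bX unfolding ultra_semimetric_def by blast
  also have "\<dots> = max (d (fst p) (snd p)) (d (fst q) (snd q))"
    using us aX xX dist_partner[OF us pX p(2)] dist_partner[OF us qX q(2)]
    unfolding ultra_semimetric_def by auto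
  also have "\<dots> \<le> phi d \<omega>"
    using phi_ge_pair[OF p(1)] phi_ge_pair[OF q\<omega>] by simp
  finally show "phi d \<omega>' \<le> phi d \<omega>"
    using rest unfolding \<omega>'_def by (intro phi_mono_subset) auto
qed

lemma shorten_conf:
  assumes us: "ultra_semimetric X d" and X: "set (conf_entries \<omega>) \<subseteq> X"
    and nd: "\<not> distinct (conf_entries \<omega>)"
  obtains \<omega>' where "length \<omega>' < length \<omega>" "set (conf_entries \<omega>') \<subseteq> X"
    "conf_sum \<omega>' = conf_sum \<omega>" "phi d \<omega>' \<le> phi d \<omega>"
proof -
  obtain xs ys zs x where dec: "conf_entries \<omega> = xs @ [x] @ ys @ [x] @ zs"
    using not_distinct_decomp[OF nd] by blast
  have twice: "2 \<le> count (mset (conf_entries \<omega>)) x"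
    unfolding dec by simp
  have "x \<in> set (conf_entries \<omega>)"
    unfolding dec by simp
  then obtain p where p: "p \<in> set \<omega>" "x = fst p \<or> x = snd p"
    unfolding set_conf_entries by blast
  show ?thesis
  proof (cases "p = (x, x)")
    case True
    then have loop: "(x, x) \<in> set \<omega>" using p(1) by simp
    have "set (conf_entries (remove1 (x, x) \<omega>)) \<subseteq> X"
      using X drop_loop(2)[OF loop] unfolding set_conf_entries by blast
    then show ?thesis
      using that drop_loop(1,3)[OF loop] drop_loop(4)[OF loop, of d] by blast
  next
    case False
    then have "partner x p \<noteq> x" using p(2) by (cases p) (auto simp: partner_def)
    then have "1 \<le> count (mset (conf_entries (remove1 p \<omega>))) x"
      using twice mset_entries_remove1[OF p(1)] mset_pair_partner[OF p(2)] by simp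
    then have "x \<in> set (conf_entries (remove1 p \<omega>))"
      by (simp add: Suc_le_eq)
    then obtain q where "q \<in> set (remove1 p \<omega>)" "x = fst q \<or> x = snd q"
      unfolding set_conf_entries by blast
    then show ?thesis
      using that merge_pairs[OF us X p] by blast
  qed
qed

lemma distinct_conf_below:
  assumes us: "ultra_semimetric X d" and "set (conf_entries \<omega>) \<subseteq> X"
  obtains \<omega>' where "set (conf_entries \<omega>') \<subseteq> X" "conf_sum \<omega>' = conf_sum \<omega>"
    "distinct (conf_entries \<omega>')" "phi d \<omega>' \<le> phi d \<omega>"
  using assms(2)
proof (induction "length \<omega>" arbitrary: \<omega> thesis rule: less_induct)
  case less
  show ?case
  proof (cases "distinct (conf_entries \<omega>)")
    case True
    then show ?thesis using less.prems by blast
  next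
    case False
    obtain \<omega>1 where "length \<omega>1 < length \<omega>" "set (conf_entries \<omega>1) \<subseteq> X"
      "conf_sum \<omega>1 = conf_sum \<omega>" "phi d \<omega>1 \<le> phi d \<omega>"
      using shorten_conf[OF us less.prems(2) False] by blast
    then show ?thesis
      using less.hyps[of \<omega>1] less.prems(1) by (metis order_trans)
  qed
qed

fun pair_up :: "'a list \<Rightarrow> ('a \<times> 'a) list" where
  "pair_up (a # b # xs) = (a, b) # pair_up xs"
| "pair_up _ = []"

lemma conf_entries_pair_up: "even (length xs) \<Longrightarrow> conf_entries (pair_up xs) = xs"
  by (induction xs rule: pair_up.induct) auto

lemma Conf_nonempty:
  assumes "u \<in> evenE X"
  shows "\<exists>\<omega>. \<omega> \<in> Conf X u \<and> distinct (conf_entries \<omega>)"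
proof -
  obtain xs where xs: "set xs = u" "distinct xs"
    using assms finite_distinct_list unfolding evenE_def by blast
  then have "even (length xs)"
    using assms distinct_card[OF xs(2)] unfolding evenE_def by simp
  then have entries: "conf_entries (pair_up xs) = xs"
    by (rule conf_entries_pair_up)
  then have "pair_up xs \<in> Conf X u"
    using xs assms conf_sum_distinct[of "pair_up xs"] unfolding Conf_def evenE_def by simp
  then show ?thesis
    using entries xs(2) by metis
qed

lemma unorm_le_phi: "\<omega> \<in> Conf X u \<Longrightarrow> unorm X d u \<le> phi d \<omega>"
  unfolding unorm_def by (rule cInf_lower) (auto intro: bdd_belowI[of _ 0] simp: phi_nonneg)

text \<open>A distinct configuration of u has entries in u, so its cost is one of finitely many values.\<close>
lemma phi_distinct_Conf_finite:
  assumes "finite u"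
  shows "finite (phi d ` {\<omega>\<in>Conf X u. distinct (conf_entries \<omega>)})"
proof (rule finite_subset)
  show "phi d ` {\<omega>\<in>Conf X u. distinct (conf_entries \<omega>)}
        \<subseteq> insert 0 ((\<lambda>p. d (fst p) (snd p)) ` (u \<times> u))"
  proof
    fix r assume "r \<in> phi d ` {\<omega>\<in>Conf X u. distinct (conf_entries \<omega>)}"
    then obtain \<omega> where \<omega>: "\<omega> \<in> Conf X u" "distinct (conf_entries \<omega>)" "r = phi d \<omega>"
      by blast
    then have "set (conf_entries \<omega>) = u"
      using conf_sum_distinct unfolding Conf_def by auto
    then have "fst ` set \<omega> \<subseteq> u" "snd ` set \<omega> \<subseteq> u"
      unfolding set_conf_entries by auto
    then have "set \<omega> \<subseteq> u \<times> u"
      by (auto simp: subset_iff mem_Times_iff)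
    then show "r \<in> insert 0 ((\<lambda>p. d (fst p) (snd p)) ` (u \<times> u))"
      using phi_in_values[of d \<omega>] \<omega>(3) by blast
  qed
  show "finite (insert 0 ((\<lambda>p. d (fst p) (snd p)) ` (u \<times> u)))"
    using assms by simp
qed

lemma unorm_attained:
  assumes us: "ultra_semimetric X d" and u: "u \<in> evenE X"
  obtains \<omega> where "\<omega> \<in> Conf X u" "distinct (conf_entries \<omega>)" "unorm X d u = phi d \<omega>"
    "\<forall>\<omega>'\<in>Conf X u. phi d \<omega> \<le> phi d \<omega>'"
proof -
  define D where "D = {\<omega>\<in>Conf X u. distinct (conf_entries \<omega>)}"
  have "finite u" using u by (simp add: evenE_def)
  then have fin: "finite (phi d ` D)"
    unfolding D_def by (rule phi_distinct_Conf_finite)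
  have "D \<noteq> {}" using Conf_nonempty[OF u] unfolding D_def by blast
  then have "Min (phi d ` D) \<in> phi d ` D"
    using Min_in[OF fin] by blast
  then obtain \<omega> where \<omega>: "\<omega> \<in> D" "phi d \<omega> = Min (phi d ` D)"
    by (metis imageE)
  have least: "\<forall>\<omega>'\<in>Conf X u. phi d \<omega> \<le> phi d \<omega>'"
  proof
    fix \<omega>' assume "\<omega>' \<in> Conf X u"
    then have X': "set (conf_entries \<omega>') \<subseteq> X" and sum': "conf_sum \<omega>' = u"
      by (simp_all add: Conf_def)
    obtain \<omega>'' where "set (conf_entries \<omega>'') \<subseteq> X" "conf_sum \<omega>'' = conf_sum \<omega>'"
      "distinct (conf_entries \<omega>'')" "phi d \<omega>'' \<le> phi d \<omega>'"
      by (rule distinct_conf_below[OF us X'])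
    then have "\<omega>'' \<in> D" "phi d \<omega>'' \<le> phi d \<omega>'"
      using sum' by (simp_all add: D_def Conf_def)
    moreover have "Min (phi d ` D) \<le> phi d \<omega>''"
      using Min_le[OF fin] \<open>\<omega>'' \<in> D\<close> by blast
    ultimately show "phi d \<omega> \<le> phi d \<omega>'"
      using \<omega>(2) by linarith
  qed
  have \<omega>_conf: "\<omega> \<in> Conf X u" "distinct (conf_entries \<omega>)"
    using \<omega>(1) by (simp_all add: D_def)
  have "unorm X d u = phi d \<omega>"
    unfolding unorm_def using \<omega>_conf(1) least by (intro cInf_eq_minimum) auto
  then show ?thesis using that \<omega>_conf least by blast
qed

lemma unorm_empty: "unorm X d {} = 0"
proof -
  have "[] \<in> Conf X {}" by (simp add: Conf_def conf_sum_def)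
  then show ?thesis
    unfolding unorm_def by (intro cInf_eq_minimum) (auto simp: phi_nonneg intro: image_eqI[of _ _ "[]"])
qed

text \<open>Ultrametric inequality: concatenate optimal configurations of u and v.\<close>
lemma unorm_ultra:
  assumes us: "ultra_semimetric X d" and "u \<in> evenE X" "v \<in> evenE X"
  shows "unorm X d (symd u v) \<le> max (unorm X d u) (unorm X d v)"
proof -
  obtain \<omega> \<omega>' where "\<omega> \<in> Conf X u" "unorm X d u = phi d \<omega>"
    and "\<omega>' \<in> Conf X v" "unorm X d v = phi d \<omega>'"
    using unorm_attained[OF us] assms(2,3) by metis
  moreover from this have "\<omega> @ \<omega>' \<in> Conf X (symd u v)"
    unfolding Conf_def by (simp add: conf_sum_append)
  ultimately show ?thesis
    using unorm_le_phi phi_append by metis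
qed

text \<open>The only distinct configurations of {x,y} are [(x,y)] and [(y,x)], so the norm of
  x - y is d x y.\<close>
lemma unorm_pair:
  assumes us: "ultra_semimetric X d" and x: "x \<in> X" and y: "y \<in> X"
  shows "unorm X d (symd {x} {y}) = d x y"
proof (cases "x = y")
  case True
  then show ?thesis using us x unorm_empty unfolding ultra_semimetric_def symd_def by simp
next
  case False
  have sum: "symd {x} {y} = {x, y}" using False by (auto simp: symd_def)
  have "{x, y} \<in> evenE X" using x y False by (simp add: evenE_def)
  then obtain \<omega> where \<omega>: "\<omega> \<in> Conf X {x, y}" "distinct (conf_entries \<omega>)"
    "unorm X d {x, y} = phi d \<omega>" "\<forall>\<omega>'\<in>Conf X {x, y}. phi d \<omega> \<le> phi d \<omega>'"
    using unorm_attained[OF us] by blast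
  have d_sym: "d y x = d x y" and d_nonneg: "0 \<le> d x y"
    using us x y unfolding ultra_semimetric_def by auto
  have "[(x, y)] \<in> Conf X {x, y}"
    using x y False by (auto simp: Conf_def conf_sum_def symd_def)
  then have upper: "phi d \<omega> \<le> d x y" using \<omega>(4) d_nonneg by force
  have entries: "set (conf_entries \<omega>) = {x, y}"
    using \<omega>(1,2) conf_sum_distinct unfolding Conf_def by auto
  then obtain p where p: "p \<in> set \<omega>" unfolding set_conf_entries by blast
  have "fst p \<noteq> snd p"
    using \<omega>(2) p by (induction \<omega>) auto
  moreover have "fst p \<in> {x, y}" "snd p \<in> {x, y}"
    using p entries unfolding set_conf_entries by auto
  ultimately have "d (fst p) (snd p) = d x y" using d_sym by auto
  then have "d x y \<le> phi d \<omega>" using phi_ge_pair[OF p, of d] by simp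
  then show ?thesis using upper \<omega>(3) sum by simp
qed

theorem mainTheorem13:
  fixes X :: "'a set" and d :: "'a \<Rightarrow> 'a \<Rightarrow> real"
  assumes "ultra_semimetric X d"
  shows "(\<forall>u\<in>evenE X. u \<noteq> {} \<longrightarrow>
            (\<exists>\<omega>\<in>Conf X u. phi d \<omega> = unorm X d u) \<and>
            (\<exists>\<omega>\<in>Conf X u. distinct (conf_entries \<omega>) \<and> phi d \<omega> = unorm X d u \<and>
               (\<forall>\<omega>'\<in>Conf X u. distinct (conf_entries \<omega>') \<longrightarrow> phi d \<omega> \<le> phi d \<omega>')))
       \<and> unorm X d {} = 0
       \<and> (\<forall>u\<in>evenE X. unorm X d u \<ge> 0)
       \<and> (\<forall>u\<in>evenE X. \<forall>v\<in>evenE X. unorm X d (symd u v) \<le> max (unorm X d u) (unorm X d v))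
       \<and> (\<forall>x\<in>X. \<forall>y\<in>X. unorm X d (symd {x} {y}) = d x y)"
proof (intro conjI ballI impI)
  fix u assume u: "u \<in> evenE X"
  obtain \<omega> where \<omega>: "\<omega> \<in> Conf X u" "distinct (conf_entries \<omega>)" "unorm X d u = phi d \<omega>"
    "\<forall>\<omega>'\<in>Conf X u. phi d \<omega> \<le> phi d \<omega>'"
    using unorm_attained[OF assms u] by blast
  show "\<exists>\<omega>\<in>Conf X u. phi d \<omega> = unorm X d u"
    using \<omega> by metis
  show "\<exists>\<omega>\<in>Conf X u. distinct (conf_entries \<omega>) \<and> phi d \<omega> = unorm X d u \<and>
          (\<forall>\<omega>'\<in>Conf X u. distinct (conf_entries \<omega>') \<longrightarrow> phi d \<omega> \<le> phi d \<omega>')"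
    using \<omega> by metis
  show "unorm X d u \<ge> 0"
    using \<omega>(3) phi_nonneg by metis
qed (simp_all add: unorm_empty unorm_ultra[OF assms] unorm_pair[OF assms])

end
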